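(* Let $\mathbb{X},\mathbb{Y}$ be finite-dimensional real inner product spaces, $S\subseteq\mathbb{Y}$ a closed set and $\Upsilon:\mathbb{X}\to\mathbb{Y}$ a twice differentiable mapping. Let $\overline{x}\in\Upsilon^{-1}(S)$ and $d\in\mathbb{X}$. Suppose that the multifunction $\mathcal{F}(z):=\Upsilon(z)-S$ is metrically subregular at $\overline{x}$ for the origin in direction $d$, and that $S$ is outer second-order regular (respectively, second-order regular) at $\Upsilon(\overline{x})$ in the direction $\Upsilon'(\overline{x})d\in\mathcal{T}_S(\Upsilon(\overline{x}))$. Then $\Upsilon^{-1}(S)$ is outer second-order regular (respectively, second-order regular) at $\overline{x}$ in the direction $d$.
   Context: For a closed set $C$ in a finite-dimensional space, $x\in C$ and a direction $d$: the (Bouligand) tangent cone is $\mathcal{T}_C(x)=\{d\mid \exists t_k\downarrow0,\ d^k\to d \text{ with } x+t_kd^k\in C\}$; the outer second-order tangent set is $\mathcal{T}^2_C(x;d)=\{w\mid \exists t_k\downarrow 0 \text{ with } \mathrm{dist}(x+t_kd+\tfrac12t_k^2w,C)=o(t_k^2)\}$; the inner second-order tangent set is $\mathcal{T}^{i,2}_C(x;d)=\{w\mid \mathrm{dist}(x+td+\tfrac12t^2w,C)=o(t^2)\text{ as } t\downarrow0\}$. $C$ is outer second-order regular at $x$ in the direction $d\in\mathcal{T}_C(x)$ if for every sequence $x+t_kd+\tfrac12t_k^2w^k\in C$ with $t_k\downarrow0$ and $t_kw^k\to0$ one has $\mathrm{dist}(w^k,\mathcal{T}^2_C(x;d))\to0$;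 $C$ is second-order regular at $x$ in the direction $d$ if in addition $\mathcal{T}^2_C(x;d)=\mathcal{T}^{i,2}_C(x;d)$. For a mapping $\Upsilon$ and closed $S$, $\mathcal{F}(z)=\Upsilon(z)-S$ is (metrically) subregular at $\overline{x}$ for the origin in direction $d$ if there are $\kappa,\rho,\delta>0$ such that $\mathrm{dist}(x,\mathcal{F}^{-1}(0))\le\kappa\,\mathrm{dist}(\Upsilon(x),S)$ for all $x\in\overline{x}+V_{\rho,\delta}$, where $V_{\rho,\delta}=\{w\mid \|w\|\le\rho,\ \|\,\|d\|w-\|w\|d\,\|\le\delta\|w\|\|d\|\}$; for $d=0$ this is ordinary metric subregularity. *)

theory Defs
  imports "HOL-Analysis.Analysis"
begin

definition tangent_cone :: "'a::real_normed_vector set \<Rightarrow> 'a \<Rightarrow> 'a set" where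
  "tangent_cone C x = {d. \<exists>t dk. (\<forall>k. t k > (0::real)) \<and> t \<longlonglongrightarrow> 0 \<and> dk \<longlonglongrightarrow> d
      \<and> (\<forall>k. x + t k *\<^sub>R dk k \<in> C)}"

definition outer_so_tangent :: "'a::real_normed_vector set \<Rightarrow> 'a \<Rightarrow> 'a \<Rightarrow> 'a set" where
  "outer_so_tangent C x d = {w. \<exists>t. (\<forall>k. t k > (0::real)) \<and> t \<longlonglongrightarrow> 0 \<and>
      (\<lambda>k. infdist (x + t k *\<^sub>R d + ((t k)\<^sup>2 / 2) *\<^sub>R w) C / (t k)\<^sup>2) \<longlonglongrightarrow> 0}"

definition inner_so_tangent :: "'a::real_normed_vector set \<Rightarrow> 'a \<Rightarrow> 'a \<Rightarrow> 'a set" where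
  "inner_so_tangent C x d = {w.
      ((\<lambda>t::real. infdist (x + t *\<^sub>R d + (t\<^sup>2 / 2) *\<^sub>R w) C / t\<^sup>2) \<longlongrightarrow> 0) (at_right 0)}"

text \<open>Outer second-order regularity at x in direction d (with d in the tangent cone).
  The condition dist(w_k, T^2) \<rightarrow> 0 is written so that an empty T^2 counts as distance +\<infinity>.\<close>
definition outer_so_regular :: "'a::real_normed_vector set \<Rightarrow> 'a \<Rightarrow> 'a \<Rightarrow> bool" where
  "outer_so_regular C x d \<longleftrightarrow> d \<in> tangent_cone C x \<and>
     (\<forall>t w. (\<forall>k. t k > (0::real)) \<longrightarrow> t \<longlonglongrightarrow> 0 \<longrightarrow>
        (\<forall>k. x + t k *\<^sub>R d + ((t k)\<^sup>2 / 2) *\<^sub>R w k \<in> C) \<longrightarrow>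
        (\<lambda>k. t k *\<^sub>R w k) \<longlonglongrightarrow> 0 \<longrightarrow>
        (\<forall>\<epsilon>>0. eventually (\<lambda>k. \<exists>v\<in>outer_so_tangent C x d. dist (w k) v < \<epsilon>) sequentially))"

definition so_regular :: "'a::real_normed_vector set \<Rightarrow> 'a \<Rightarrow> 'a \<Rightarrow> bool" where
  "so_regular C x d \<longleftrightarrow> outer_so_regular C x d \<and>
     outer_so_tangent C x d = inner_so_tangent C x d"

definition dir_nbhd :: "'a::real_normed_vector \<Rightarrow> real \<Rightarrow> real \<Rightarrow> 'a set" where
  "dir_nbhd d \<rho> \<delta> = {w. norm w \<le> \<rho> \<and>
      norm (norm d *\<^sub>R w - norm w *\<^sub>R d) \<le> \<delta> * norm w * norm d}"

definition dir_metric_subregular ::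
  "('a::real_normed_vector \<Rightarrow> 'b::real_normed_vector) \<Rightarrow> 'b set \<Rightarrow> 'a \<Rightarrow> 'a \<Rightarrow> bool" where
  "dir_metric_subregular Ups S xbar d \<longleftrightarrow>
     (\<exists>\<kappa> \<rho> \<delta>. \<kappa> > 0 \<and> \<rho> > 0 \<and> \<delta> > 0 \<and>
        (\<forall>w\<in>dir_nbhd d \<rho> \<delta>. infdist (xbar + w) (Ups -` S) \<le> \<kappa> * infdist (Ups (xbar + w)) S))"

end

theory Submission
  imports Defs
begin

text \<open>
  Along a parabolic curve \<open>xbar + t d + t\<^sup>2/2 w\<close> the second-order Taylor expansion of \<open>Ups\<close>
  produces the parabolic curve through \<open>Ups xbar\<close> in direction \<open>Ups' d\<close> whose second-order
  coordinate is \<open>Ups' w + Ups'' d d + o(1)\<close>. As \<open>t \<down> 0\<close> the curve eventually lies in the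
  directional neighbourhood of \<open>d\<close>, so subregularity bounds its distance to \<open>Ups -` S\<close> by
  \<open>\<kappa>\<close> times the distance of its image to \<open>S\<close>. Dividing by \<open>t\<^sup>2\<close> and passing to a limit,
  every \<open>w\<close> lies within \<open>\<kappa> \<parallel>Ups' w + Ups'' d d - u\<parallel>\<close> of the outer second-order tangent set of
  \<open>Ups -` S\<close> whenever \<open>u\<close> is an outer second-order tangent of \<open>S\<close>. This transfers outer
  second-order regularity from \<open>S\<close> to \<open>Ups -` S\<close>; the same estimate, taken along an
  arbitrary sequence \<open>t \<down> 0\<close>, turns outer second-order tangents of \<open>Ups -` S\<close> into inner ones
  as soon as this holds for \<open>S\<close>.
\<close>

text \<open>An abbreviation rather than a definition, so that it matches the curves written out in the
  definitions of the second-order tangent sets.\<close>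

abbreviation so_curve :: "'a::real_normed_vector \<Rightarrow> 'a \<Rightarrow> real \<Rightarrow> 'a \<Rightarrow> 'a" where
  "so_curve x d t w \<equiv> x + t *\<^sub>R d + (t\<^sup>2 / 2) *\<^sub>R w"

section \<open>Second-order Taylor expansion\<close>

lemma second_order_remainder_bound:
  fixes f :: "'a::real_normed_vector \<Rightarrow> 'b::real_inner" and f' :: "'a \<Rightarrow> 'a \<Rightarrow>\<^sub>L 'b"
  assumes f': "\<And>x. (f has_derivative f' x) (at x)" and L: "linear L"
    and near: "\<And>y. norm (y - a) < r \<Longrightarrow> norm (f' y - f' a - L (y - a)) \<le> \<epsilon> * norm (y - a)"
    and h: "norm h < r" and "\<epsilon> \<ge> 0"
  shows "norm (f (a + h) - f a - f' a h - (1/2) *\<^sub>R L h h) \<le> \<epsilon> * (norm h)\<^sup>2"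
proof -
  define \<psi> where "\<psi> s = f (a + s *\<^sub>R h) - s *\<^sub>R f' a h - (s\<^sup>2 / 2) *\<^sub>R L h h" for s :: real
  define \<psi>' where "\<psi>' s q = q *\<^sub>R (f' (a + s *\<^sub>R h) h - f' a h - s *\<^sub>R L h h)" for s q :: real
  have der: "(\<psi> has_derivative \<psi>' s) (at s)" for s
  proof -
    have "((\<lambda>s. a + s *\<^sub>R h) has_derivative (\<lambda>q. q *\<^sub>R h)) (at s)"
      by (auto intro!: derivative_eq_intros)
    from has_derivative_compose[OF this f']
    have "((\<lambda>s. f (a + s *\<^sub>R h)) has_derivative (\<lambda>q. f' (a + s *\<^sub>R h) (q *\<^sub>R h))) (at s)"
      by (simp add: o_def)
    then have "(\<psi> has_derivative (\<lambda>q. f' (a + s *\<^sub>R h) (q *\<^sub>R h) - q *\<^sub>R f' a h - (q * s) *\<^sub>R L h h)) (at s)"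
      unfolding \<psi>_def by (auto intro!: derivative_eq_intros simp: algebra_simps)
    then show ?thesis
      by (rule has_derivative_eq_rhs) (simp add: fun_eq_iff \<psi>'_def blinfun.scaleR_right algebra_simps)
  qed
  have "continuous_on {0..1} \<psi>"
    using der has_derivative_continuous continuous_at_imp_continuous_on by blast
  then obtain s where s: "s \<in> {0<..<1}" and mvt: "norm (\<psi> 1 - \<psi> 0) \<le> norm (\<psi>' s 1)"
    using mvt_general[of 0 1 \<psi> \<psi>'] der by auto
  have sh: "norm (s *\<^sub>R h) \<le> norm h"
    using s by (auto intro!: mult_left_le_one_le)
  have "\<psi>' s 1 = (f' (a + s *\<^sub>R h) - f' a - L (s *\<^sub>R h)) h"
    by (simp add: \<psi>'_def linear_scale[OF L] blinfun.diff_left blinfun.scaleR_left)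
  then have "norm (\<psi>' s 1) \<le> norm (f' (a + s *\<^sub>R h) - f' a - L (s *\<^sub>R h)) * norm h"
    by (simp add: norm_blinfun)
  also have "\<dots> \<le> \<epsilon> * norm (s *\<^sub>R h) * norm h"
    using near[of "a + s *\<^sub>R h"] sh h by (intro mult_right_mono) auto
  also have "\<dots> \<le> \<epsilon> * (norm h)\<^sup>2"
    using sh \<open>\<epsilon> \<ge> 0\<close> unfolding power2_eq_square mult.assoc
    by (intro mult_left_mono mult_right_mono) auto
  finally show ?thesis
    using mvt by (simp add: \<psi>_def algebra_simps)
qed

lemma second_order_taylor:
  fixes f :: "'a::real_normed_vector \<Rightarrow> 'b::real_inner" and f' :: "'a \<Rightarrow> 'a \<Rightarrow>\<^sub>L 'b"
  assumes f': "\<And>x. (f has_derivative f' x) (at x)" and f'': "(f' has_derivative f'') (at a)"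
  shows "((\<lambda>h. norm (f (a + h) - f a - f' a h - (1/2) *\<^sub>R f'' h h) / (norm h)\<^sup>2) \<longlongrightarrow> 0) (at 0)"
proof (rule metric_LIM_I)
  fix \<epsilon> :: real assume "\<epsilon> > 0"
  then obtain r where "r > 0"
    and near: "\<And>y. norm (y - a) < r \<Longrightarrow> norm (f' y - f' a - f'' (y - a)) \<le> \<epsilon> / 2 * norm (y - a)"
    using f'' unfolding has_derivative_at_alt by (meson half_gt_zero)
  have "dist (norm (f (a + h) - f a - f' a h - (1/2) *\<^sub>R f'' h h) / (norm h)\<^sup>2) 0 < \<epsilon>"
    if "h \<noteq> 0" "dist h 0 < r" for h
  proof -
    have "norm (f (a + h) - f a - f' a h - (1/2) *\<^sub>R f'' h h) \<le> \<epsilon> / 2 * (norm h)\<^sup>2"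
      using second_order_remainder_bound[OF f' _ near] f'' \<open>\<epsilon> > 0\<close> that
      by (simp add: has_derivative_linear)
    also have "\<dots> < \<epsilon> * (norm h)\<^sup>2"
      using \<open>\<epsilon> > 0\<close> \<open>h \<noteq> 0\<close> by simp
    finally show ?thesis
      using \<open>h \<noteq> 0\<close> by (simp add: divide_less_eq)
  qed
  then show "\<exists>r>0. \<forall>h. h \<noteq> 0 \<and> dist h 0 < r \<longrightarrow>
      dist (norm (f (a + h) - f a - f' a h - (1/2) *\<^sub>R f'' h h) / (norm h)\<^sup>2) 0 < \<epsilon>"
    using \<open>r > 0\<close> by blast
qed

lemma second_order_remainder_along_sequence:
  fixes f :: "'a::real_normed_vector \<Rightarrow> 'b::real_inner" and f' :: "'a \<Rightarrow> 'a \<Rightarrow>\<^sub>L 'b"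
  assumes f': "\<And>x. (f has_derivative f' x) (at x)" and f'': "(f' has_derivative f'') (at a)"
    and t: "\<forall>k. t k > 0" "t \<longlonglongrightarrow> 0" and q: "q \<longlonglongrightarrow> d"
  shows "(\<lambda>k. (1 / (t k)\<^sup>2) *\<^sub>R (f (a + t k *\<^sub>R q k) - f a - f' a (t k *\<^sub>R q k)
           - (1/2) *\<^sub>R f'' (t k *\<^sub>R q k) (t k *\<^sub>R q k))) \<longlonglongrightarrow> 0"
proof -
  define R where "R h = f (a + h) - f a - f' a h - (1/2) *\<^sub>R f'' h h" for h
  define \<phi> where "\<phi> = (\<lambda>h. norm (R h) / (norm h)\<^sup>2)"
  have "isCont \<phi> 0"
    using second_order_taylor[OF f' f''] by (simp add: isCont_def \<phi>_def R_def)
  moreover have "(\<lambda>k. t k *\<^sub>R q k) \<longlonglongrightarrow> 0"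
    using tendsto_scaleR[OF t(2) q] by simp
  ultimately have "(\<lambda>k. \<phi> (t k *\<^sub>R q k)) \<longlonglongrightarrow> \<phi> 0"
    by (rule isCont_tendsto_compose)
  then have "(\<lambda>k. \<phi> (t k *\<^sub>R q k) * (norm (q k))\<^sup>2) \<longlonglongrightarrow> \<phi> 0 * (norm d)\<^sup>2"
    by (intro tendsto_intros q)
  then have lim: "(\<lambda>k. \<phi> (t k *\<^sub>R q k) * (norm (q k))\<^sup>2) \<longlonglongrightarrow> 0"
    by (simp add: \<phi>_def)
  have eq: "norm ((1 / (t k)\<^sup>2) *\<^sub>R R (t k *\<^sub>R q k)) = \<phi> (t k *\<^sub>R q k) * (norm (q k))\<^sup>2" for k
  proof (cases "q k = 0")
    case False
    moreover have "t k > 0"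
      using t by blast
    ultimately show ?thesis
      by (simp add: \<phi>_def power_mult_distrib)
  qed (simp add: R_def \<phi>_def)
  have "(\<lambda>k. norm ((1 / (t k)\<^sup>2) *\<^sub>R R (t k *\<^sub>R q k))) \<longlonglongrightarrow> 0"
    unfolding eq by (rule lim)
  then have "(\<lambda>k. (1 / (t k)\<^sup>2) *\<^sub>R R (t k *\<^sub>R q k)) \<longlonglongrightarrow> 0"
    by (rule tendsto_norm_zero_cancel)
  then show ?thesis
    unfolding R_def .
qed

lemma second_order_expansion_along_curve:
  fixes f :: "'a::real_normed_vector \<Rightarrow> 'b::real_inner" and f' :: "'a \<Rightarrow> 'a \<Rightarrow>\<^sub>L 'b"
  assumes f': "\<And>x. (f has_derivative f' x) (at x)" and f'': "(f' has_derivative f'') (at a)"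
    and t: "\<forall>k. t k > 0" "t \<longlonglongrightarrow> 0" and tw: "(\<lambda>k. t k *\<^sub>R w k) \<longlonglongrightarrow> 0"
  shows "(\<lambda>k. (2 / (t k)\<^sup>2) *\<^sub>R (f (so_curve a d (t k) (w k)) - f a - t k *\<^sub>R f' a d)
           - (f' a (w k) + f'' d d)) \<longlonglongrightarrow> 0"
proof -
  define R where "R h = f (a + h) - f a - f' a h - (1/2) *\<^sub>R f'' h h" for h
  define q where "q = (\<lambda>k. d + (1/2) *\<^sub>R (t k *\<^sub>R w k))"
  have q: "q \<longlonglongrightarrow> d"
    unfolding q_def using tendsto_add[OF tendsto_const tendsto_scaleR[OF tendsto_const tw], of d "1/2"]
    by simp
  have lin: "linear f''"
    using f'' has_derivative_linear by blast
  have expand: "(2 / (t k)\<^sup>2) *\<^sub>R (f (so_curve a d (t k) (w k)) - f a - t k *\<^sub>R f' a d) - (f' a (w k) + f'' d d)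
      = (2 / (t k)\<^sup>2) *\<^sub>R R (t k *\<^sub>R q k) + (f'' (q k) (q k) - f'' d d)" for k
  proof -
    have curve: "so_curve a d (t k) (w k) = a + t k *\<^sub>R q k"
      by (simp add: q_def scaleR_add_right power2_eq_square)
    have A: "f' a (t k *\<^sub>R q k) = t k *\<^sub>R f' a d + ((t k)\<^sup>2 / 2) *\<^sub>R f' a (w k)"
      by (simp add: q_def blinfun.add_right blinfun.scaleR_right scaleR_add_right power2_eq_square)
    have B: "f'' (t k *\<^sub>R q k) (t k *\<^sub>R q k) = (t k)\<^sup>2 *\<^sub>R f'' (q k) (q k)"
      by (simp add: linear_scale[OF lin] blinfun.scaleR_left blinfun.scaleR_right power2_eq_square)
    have "t k \<noteq> 0"
      using t by (metis less_irrefl)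
    then have "(2 / (t k)\<^sup>2) *\<^sub>R R (t k *\<^sub>R q k)
        = (2 / (t k)\<^sup>2) *\<^sub>R (f (so_curve a d (t k) (w k)) - f a - t k *\<^sub>R f' a d) - f' a (w k) - f'' (q k) (q k)"
      by (simp add: R_def curve A B scaleR_diff_right scaleR_add_right)
    then show ?thesis
      by (simp add: algebra_simps)
  qed
  have remainder: "(\<lambda>k. (1 / (t k)\<^sup>2) *\<^sub>R R (t k *\<^sub>R q k)) \<longlonglongrightarrow> 0"
    unfolding R_def by (rule second_order_remainder_along_sequence[OF f' f'' t q])
  have "(\<lambda>k. (2 / (t k)\<^sup>2) *\<^sub>R R (t k *\<^sub>R q k)) \<longlonglongrightarrow> 0"
    using tendsto_scaleR[OF tendsto_const remainder, of 2] by simp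
  moreover have "(\<lambda>k. f'' (q k) (q k) - f'' d d) \<longlonglongrightarrow> 0"
    using tendsto_diff[OF bounded_bilinear.tendsto[OF bounded_bilinear_blinfun_apply
          bounded_linear.tendsto[OF has_derivative_bounded_linear[OF f''] q] q] tendsto_const, of "f'' d d"]
    by simp
  ultimately show ?thesis
    unfolding expand by (rule tendsto_add_zero)
qed

section \<open>Second-order tangent sets\<close>

lemma infdist_so_curve_le:
  "infdist (so_curve x d t u) C \<le> infdist (so_curve x d t v) C + (t\<^sup>2 / 2) * dist u v"
proof -
  have "dist (so_curve x d t u) (so_curve x d t v) = (t\<^sup>2 / 2) * dist u v"
    by (simp add: dist_norm flip: scaleR_diff_right)
  then show ?thesis
    by (metis infdist_triangle)
qed

lemma so_curve_nearest:
  fixes C :: "'a::{real_normed_vector, heine_borel} set"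
  assumes "closed C" "C \<noteq> {}" and t: "\<forall>k. t k > 0"
  obtains w where "\<forall>k. so_curve x d (t k) (w k) \<in> C"
    and "\<And>k. infdist (so_curve x d (t k) v) C = ((t k)\<^sup>2 / 2) * dist v (w k)"
proof -
  have "\<exists>w. so_curve x d (t k) w \<in> C \<and> infdist (so_curve x d (t k) v) C = ((t k)\<^sup>2 / 2) * dist v w" for k
  proof -
    obtain p where "p \<in> C" and p: "infdist (so_curve x d (t k) v) C = dist (so_curve x d (t k) v) p"
      using infdist_attains_inf[OF assms(1,2)] by blast
    define w where "w = (2 / (t k)\<^sup>2) *\<^sub>R (p - x - t k *\<^sub>R d)"
    have curve: "so_curve x d (t k) w = p"
      using t by (simp add: w_def less_imp_neq[symmetric])
    have "dist (so_curve x d (t k) v) (so_curve x d (t k) w) = ((t k)\<^sup>2 / 2) * dist v w"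
      by (simp add: dist_norm flip: scaleR_diff_right)
    then have "infdist (so_curve x d (t k) v) C = ((t k)\<^sup>2 / 2) * dist v w"
      using p curve by simp
    with \<open>p \<in> C\<close> curve show ?thesis
      by auto
  qed
  then obtain w where "\<forall>k. so_curve x d (t k) (w k) \<in> C"
    and "\<And>k. infdist (so_curve x d (t k) v) C = ((t k)\<^sup>2 / 2) * dist v (w k)"
    by metis
  then show ?thesis
    using that by blast
qed

lemma outer_so_tangentI:
  fixes t :: "nat \<Rightarrow> real" and w :: "nat \<Rightarrow> 'a::real_normed_vector" and x d v :: 'a
  assumes t: "\<forall>k. t k > 0" "t \<longlonglongrightarrow> 0" and w: "w \<longlonglongrightarrow> v"
    and C: "\<forall>k. so_curve x d (t k) (w k) \<in> C"
  shows "v \<in> outer_so_tangent C x d"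
  unfolding outer_so_tangent_def
proof (intro CollectI exI[of _ t] conjI t)
  show "(\<lambda>k. infdist (so_curve x d (t k) v) C / (t k)\<^sup>2) \<longlonglongrightarrow> 0"
  proof (rule Lim_null_comparison)
    show "\<forall>\<^sub>F k in sequentially. norm (infdist (so_curve x d (t k) v) C / (t k)\<^sup>2) \<le> dist v (w k) / 2"
    proof (intro always_eventually allI)
      fix k
      have "infdist (so_curve x d (t k) (w k)) C = 0"
        using C by (simp add: infdist_zero)
      then have "infdist (so_curve x d (t k) v) C \<le> ((t k)\<^sup>2 / 2) * dist v (w k)"
        using infdist_so_curve_le[where x = x and d = d and t = "t k" and C = C and u = v and v = "w k"]
        by simp
      then show "norm (infdist (so_curve x d (t k) v) C / (t k)\<^sup>2) \<le> dist v (w k) / 2"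
        using t by (simp add: infdist_nonneg divide_simps mult.commute)
    qed
    have "(\<lambda>k. dist v (w k)) \<longlonglongrightarrow> 0"
      using tendsto_dist[OF tendsto_const w, of v] by simp
    then show "(\<lambda>k. dist v (w k) / 2) \<longlonglongrightarrow> 0"
      by (rule tendsto_divide_zero)
  qed
qed

lemma outer_so_tangentE:
  fixes C :: "'a::{real_normed_vector, heine_borel} set"
  assumes "closed C" "C \<noteq> {}" and "v \<in> outer_so_tangent C x d"
  obtains t w where "\<forall>k. t k > 0" "t \<longlonglongrightarrow> 0" "w \<longlonglongrightarrow> v" "\<forall>k. so_curve x d (t k) (w k) \<in> C"
proof -
  obtain t where t: "\<forall>k. t k > 0" "t \<longlonglongrightarrow> 0"
    and lim: "(\<lambda>k. infdist (so_curve x d (t k) v) C / (t k)\<^sup>2) \<longlonglongrightarrow> 0"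
    using assms(3) unfolding outer_so_tangent_def by blast
  obtain w where w: "\<forall>k. so_curve x d (t k) (w k) \<in> C"
    and dw: "\<And>k. infdist (so_curve x d (t k) v) C = ((t k)\<^sup>2 / 2) * dist v (w k)"
    using so_curve_nearest[OF assms(1,2) t(1)] by blast
  have "dist (w k) v = 2 * (infdist (so_curve x d (t k) v) C / (t k)\<^sup>2)" for k
    using t(1)[rule_format, of k] by (simp add: dw dist_commute)
  then have "(\<lambda>k. dist (w k) v) \<longlonglongrightarrow> 0"
    using tendsto_mult_right_zero[OF lim, of 2] by presburger
  then have "w \<longlonglongrightarrow> v"
    by (rule tendsto_dist_iff[THEN iffD2])
  then show ?thesis
    using that t w by blast
qed

lemma outer_so_tangent_near:
  fixes C :: "'a::{real_normed_vector, heine_borel} set"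
  assumes "closed C" "C \<noteq> {}" and s: "\<forall>k. s k > 0" "s \<longlonglongrightarrow> 0"
    and bound: "eventually (\<lambda>k. 2 * infdist (so_curve x d (s k) v) C / (s k)\<^sup>2 \<le> f k) sequentially"
    and f: "f \<longlonglongrightarrow> c"
  shows "\<exists>v'\<in>outer_so_tangent C x d. dist v v' \<le> c"
proof -
  obtain w where w: "\<forall>k. so_curve x d (s k) (w k) \<in> C"
    and dw: "\<And>k. infdist (so_curve x d (s k) v) C = ((s k)\<^sup>2 / 2) * dist v (w k)"
    using so_curve_nearest[OF assms(1,2) s(1)] by blast
  have close: "eventually (\<lambda>k. dist v (w k) \<le> f k) sequentially"
    using bound by (rule eventually_mono) (use s(1) in \<open>simp add: dw less_imp_neq[symmetric]\<close>)
  have "Bseq (\<lambda>k. w k - v)"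
  proof (rule Bseq_eventually_mono)
    show "eventually (\<lambda>k. norm (w k - v) \<le> norm (f k)) sequentially"
      using close by (rule eventually_mono) (simp add: dist_norm norm_minus_commute)
    show "Bseq f"
      using f by (auto intro: convergent_imp_Bseq convergentI)
  qed
  then have "bounded (range w)"
    using Bseq_add[of "\<lambda>k. w k - v" v] by (simp add: Bseq_eq_bounded)
  then obtain r v' where r: "strict_mono r" and v': "(w \<circ> r) \<longlonglongrightarrow> v'"
    using bounded_imp_convergent_subsequence by blast
  have "v' \<in> outer_so_tangent C x d"
    using outer_so_tangentI[OF _ LIMSEQ_subseq_LIMSEQ[OF s(2) r] v'] s(1) w by simp
  moreover have "dist v v' \<le> c"
  proof (rule tendsto_le[OF trivial_limit_sequentially])
    show "(\<lambda>k. dist v ((w \<circ> r) k)) \<longlonglongrightarrow> dist v v'"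
      by (intro tendsto_intros v')
    show "(f \<circ> r) \<longlonglongrightarrow> c"
      using LIMSEQ_subseq_LIMSEQ[OF f r] .
    show "eventually (\<lambda>k. dist v ((w \<circ> r) k) \<le> (f \<circ> r) k) sequentially"
      using eventually_subseq[OF r close] by simp
  qed
  ultimately show ?thesis
    by blast
qed

lemma tangent_coneI_infdist:
  fixes C :: "'a::{real_normed_vector, heine_borel} set"
  assumes "closed C" "C \<noteq> {}" and t: "\<forall>k. t k > 0" "t \<longlonglongrightarrow> 0"
    and lim: "(\<lambda>k. infdist (x + t k *\<^sub>R d) C / t k) \<longlonglongrightarrow> 0"
  shows "d \<in> tangent_cone C x"
proof -
  have "\<forall>k. \<exists>p\<in>C. infdist (x + t k *\<^sub>R d) C = dist (x + t k *\<^sub>R d) p"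
    using infdist_attains_inf[OF assms(1,2)] by blast
  then obtain p where p: "\<And>k. p k \<in> C" and dp: "\<And>k. infdist (x + t k *\<^sub>R d) C = dist (x + t k *\<^sub>R d) (p k)"
    by metis
  define dk where "dk k = (p k - x) /\<^sub>R t k" for k
  have "dist (dk k) d = infdist (x + t k *\<^sub>R d) C / t k" for k
  proof -
    have "dk k - d = (p k - (x + t k *\<^sub>R d)) /\<^sub>R t k"
      using t(1)[rule_format, of k] by (simp add: dk_def algebra_simps)
    then show ?thesis
      using t(1)[rule_format, of k] by (simp add: dp dist_norm norm_minus_commute divide_inverse_commute)
  qed
  then have "(\<lambda>k. dist (dk k) d) \<longlonglongrightarrow> 0"
    using lim by presburger
  then have "dk \<longlonglongrightarrow> d"
    by (rule tendsto_dist_iff[THEN iffD2])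
  moreover have "x + t k *\<^sub>R dk k \<in> C" for k
    using p t(1)[rule_format, of k] by (simp add: dk_def)
  ultimately show ?thesis
    unfolding tangent_cone_def using t by blast
qed

lemma inner_so_tangent_subset_outer: "inner_so_tangent C x d \<subseteq> outer_so_tangent C x d"
proof
  fix w assume "w \<in> inner_so_tangent C x d"
  then have lim: "((\<lambda>t. infdist (so_curve x d t w) C / t\<^sup>2) \<longlongrightarrow> 0) (at_right 0)"
    by (simp add: inner_so_tangent_def)
  define t where "t = (\<lambda>k. inverse (real (Suc k)))"
  have t: "\<forall>k. t k > 0" "t \<longlonglongrightarrow> 0"
    using LIMSEQ_inverse_real_of_nat by (auto simp: t_def)
  then have "filterlim t (at_right 0) sequentially"
    by (simp add: tendsto_imp_filterlim_at_right)
  from filterlim_compose[OF lim this] t show "w \<in> outer_so_tangent C x d"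
    unfolding outer_so_tangent_def by blast
qed

section \<open>Preimages under a directionally subregular map\<close>

lemma eventually_in_dir_nbhd:
  fixes h :: "nat \<Rightarrow> 'a::real_normed_vector"
  assumes "\<rho> > 0" "\<delta> > 0" and t: "\<forall>k. t k > 0" "t \<longlonglongrightarrow> 0"
    and hd: "(\<lambda>k. h k /\<^sub>R t k) \<longlonglongrightarrow> d"
  shows "eventually (\<lambda>k. h k \<in> dir_nbhd d \<rho> \<delta>) sequentially"
proof -
  define q where "q = (\<lambda>k. h k /\<^sub>R t k)"
  have q: "q \<longlonglongrightarrow> d"
    using hd by (simp add: q_def)
  have h: "h k = t k *\<^sub>R q k" for k
    using t by (simp add: q_def less_imp_neq[symmetric])
  have "(\<lambda>k. t k *\<^sub>R q k) \<longlonglongrightarrow> 0"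
    using tendsto_scaleR[OF t(2) q] by (simp add: q_def)
  then have "(\<lambda>k. norm (h k)) \<longlonglongrightarrow> 0"
    unfolding h by (rule tendsto_norm_zero)
  then have "eventually (\<lambda>k. norm (h k) < \<rho>) sequentially"
    using \<open>\<rho> > 0\<close> by (rule order_tendstoD(2))
  moreover have "eventually (\<lambda>k. norm (norm d *\<^sub>R q k - norm (q k) *\<^sub>R d) \<le> \<delta> * norm (q k) * norm d) sequentially"
  proof (cases "d = 0")
    case False
    have "(\<lambda>k. \<delta> * norm (q k) * norm d - norm (norm d *\<^sub>R q k - norm (q k) *\<^sub>R d))
        \<longlonglongrightarrow> \<delta> * norm d * norm d - norm (norm d *\<^sub>R d - norm d *\<^sub>R d)"
      using q by (intro tendsto_intros) (simp add: q_def)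
    moreover have "\<delta> * norm d * norm d - norm (norm d *\<^sub>R d - norm d *\<^sub>R d) > 0"
      using False \<open>\<delta> > 0\<close> by simp
    ultimately have "eventually (\<lambda>k. 0 < \<delta> * norm (q k) * norm d - norm (norm d *\<^sub>R q k - norm (q k) *\<^sub>R d)) sequentially"
      by (rule order_tendstoD(1))
    then show ?thesis
      by (rule eventually_mono) simp
  qed simp
  ultimately show ?thesis
  proof eventually_elim
    case (elim k)
    have "norm d *\<^sub>R h k - norm (h k) *\<^sub>R d = t k *\<^sub>R (norm d *\<^sub>R q k - norm (q k) *\<^sub>R d)"
      using t by (simp add: h scaleR_diff_right abs_of_pos)
    then have "norm (norm d *\<^sub>R h k - norm (h k) *\<^sub>R d) = t k * norm (norm d *\<^sub>R q k - norm (q k) *\<^sub>R d)"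
      using t by (simp add: abs_of_pos)
    also have "\<dots> \<le> t k * (\<delta> * norm (q k) * norm d)"
      using elim less_imp_le[OF t(1)[rule_format]] by (intro mult_left_mono) auto
    finally show ?case
      using elim t(1)[rule_format, of k] by (simp add: dir_nbhd_def h abs_of_pos mult_ac)
  qed
qed

locale subregular_constraint =
  fixes Ups :: "'a::euclidean_space \<Rightarrow> 'b::euclidean_space" and D D2 :: "'a \<Rightarrow> 'a \<Rightarrow>\<^sub>L 'b"
    and S :: "'b set" and xbar d :: 'a and \<kappa> \<rho> \<delta> :: real
  assumes closed_S: "closed S"
    and has_derivative_Ups: "\<And>x. (Ups has_derivative D x) (at x)"
    and has_derivative_D: "(D has_derivative D2) (at xbar)"
    and feasible: "Ups xbar \<in> S"
    and pos: "\<kappa> > 0" "\<rho> > 0" "\<delta> > 0"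
    and subregular: "\<forall>w\<in>dir_nbhd d \<rho> \<delta>. infdist (xbar + w) (Ups -` S) \<le> \<kappa> * infdist (Ups (xbar + w)) S"
begin

lemma closed_preimage: "closed (Ups -` S)"
proof -
  have "continuous_on UNIV Ups"
    using has_derivative_Ups has_derivative_continuous continuous_at_imp_continuous_on by blast
  then show ?thesis
    using closed_S by (simp add: closed_vimage)
qed

lemma preimage_nonempty: "Ups -` S \<noteq> {}"
  using feasible by blast

definition image_coord :: "real \<Rightarrow> 'a \<Rightarrow> 'b" where
  "image_coord t w = (2 / t\<^sup>2) *\<^sub>R (Ups (so_curve xbar d t w) - Ups xbar - t *\<^sub>R D xbar d)"

lemma Ups_so_curve:
  assumes "t \<noteq> 0"
  shows "Ups (so_curve xbar d t w) = so_curve (Ups xbar) (D xbar d) t (image_coord t w)"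
  using assms by (simp add: image_coord_def)

lemma image_coord_expansion:
  assumes "\<forall>k. t k > 0" "t \<longlonglongrightarrow> 0" "(\<lambda>k. t k *\<^sub>R w k) \<longlonglongrightarrow> 0"
  shows "(\<lambda>k. image_coord (t k) (w k) - (D xbar (w k) + D2 d d)) \<longlonglongrightarrow> 0"
  unfolding image_coord_def
  using second_order_expansion_along_curve[OF has_derivative_Ups has_derivative_D assms] .

lemma eventually_subregular_on_curve:
  assumes t: "\<forall>k. t k > 0" "t \<longlonglongrightarrow> 0" and tw: "(\<lambda>k. t k *\<^sub>R w k) \<longlonglongrightarrow> 0"
  shows "eventually (\<lambda>k. infdist (so_curve xbar d (t k) (w k)) (Ups -` S)
           \<le> \<kappa> * infdist (Ups (so_curve xbar d (t k) (w k))) S) sequentially"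
proof -
  have eq: "(t k *\<^sub>R d + ((t k)\<^sup>2 / 2) *\<^sub>R w k) /\<^sub>R t k = d + (1/2) *\<^sub>R (t k *\<^sub>R w k)" for k
    using t(1)[rule_format, of k] by (simp add: power2_eq_square scaleR_add_right)
  have "(\<lambda>k. (t k *\<^sub>R d + ((t k)\<^sup>2 / 2) *\<^sub>R w k) /\<^sub>R t k) \<longlonglongrightarrow> d"
    unfolding eq using tendsto_add[OF tendsto_const tendsto_scaleR[OF tendsto_const tw], of d "1/2"]
    by simp
  with pos(2,3) t have "eventually (\<lambda>k. t k *\<^sub>R d + ((t k)\<^sup>2 / 2) *\<^sub>R w k \<in> dir_nbhd d \<rho> \<delta>) sequentially"
    by (rule eventually_in_dir_nbhd)
  then show ?thesis
  proof (rule eventually_mono)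
    fix k
    assume "t k *\<^sub>R d + ((t k)\<^sup>2 / 2) *\<^sub>R w k \<in> dir_nbhd d \<rho> \<delta>"
    from subregular[rule_format, OF this]
    show "infdist (so_curve xbar d (t k) (w k)) (Ups -` S) \<le> \<kappa> * infdist (Ups (so_curve xbar d (t k) (w k))) S"
      by (simp only: add.assoc)
  qed
qed

lemma eventually_infdist_curve_le:
  assumes t: "\<forall>k. t k > 0" "t \<longlonglongrightarrow> 0" and tw: "(\<lambda>k. t k *\<^sub>R w k) \<longlonglongrightarrow> 0"
  shows "eventually (\<lambda>k. infdist (so_curve xbar d (t k) (w k)) (Ups -` S) / (t k)\<^sup>2
           \<le> \<kappa> * (infdist (so_curve (Ups xbar) (D xbar d) (t k) u) S / (t k)\<^sup>2
                    + dist (image_coord (t k) (w k)) u / 2)) sequentially"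
  using eventually_subregular_on_curve[OF t tw]
proof (rule eventually_mono)
  fix k
  assume sub: "infdist (so_curve xbar d (t k) (w k)) (Ups -` S) \<le> \<kappa> * infdist (Ups (so_curve xbar d (t k) (w k))) S"
  have "t k \<noteq> 0"
    using t(1) by (metis less_irrefl)
  have "infdist (Ups (so_curve xbar d (t k) (w k))) S
      \<le> infdist (so_curve (Ups xbar) (D xbar d) (t k) u) S + ((t k)\<^sup>2 / 2) * dist (image_coord (t k) (w k)) u"
    unfolding Ups_so_curve[OF \<open>t k \<noteq> 0\<close>] by (rule infdist_so_curve_le)
  with sub have "infdist (so_curve xbar d (t k) (w k)) (Ups -` S)
      \<le> \<kappa> * (infdist (so_curve (Ups xbar) (D xbar d) (t k) u) S + ((t k)\<^sup>2 / 2) * dist (image_coord (t k) (w k)) u)"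
    using pos(1) by (meson mult_left_mono less_imp_le order_trans)
  then show "infdist (so_curve xbar d (t k) (w k)) (Ups -` S) / (t k)\<^sup>2
           \<le> \<kappa> * (infdist (so_curve (Ups xbar) (D xbar d) (t k) u) S / (t k)\<^sup>2
                    + dist (image_coord (t k) (w k)) u / 2)"
    using \<open>t k \<noteq> 0\<close> by (simp add: divide_simps algebra_simps)
qed

lemma image_coord_tendsto:
  assumes t: "\<forall>k. t k > 0" "t \<longlonglongrightarrow> 0" and tw: "(\<lambda>k. t k *\<^sub>R w k) \<longlonglongrightarrow> 0" and w: "w \<longlonglongrightarrow> v"
  shows "(\<lambda>k. image_coord (t k) (w k)) \<longlonglongrightarrow> D xbar v + D2 d d"
proof -
  have "(\<lambda>k. (image_coord (t k) (w k) - (D xbar (w k) + D2 d d)) + (D xbar (w k) + D2 d d))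
      \<longlonglongrightarrow> 0 + (D xbar v + D2 d d)"
    by (intro tendsto_intros image_coord_expansion[OF t tw] w)
  then show ?thesis
    by simp
qed

lemma image_coord_scaled_tendsto_zero:
  assumes t: "\<forall>k. t k > 0" "t \<longlonglongrightarrow> 0" and tw: "(\<lambda>k. t k *\<^sub>R w k) \<longlonglongrightarrow> 0"
  shows "(\<lambda>k. t k *\<^sub>R image_coord (t k) (w k)) \<longlonglongrightarrow> 0"
proof -
  have "(\<lambda>k. t k *\<^sub>R (image_coord (t k) (w k) - (D xbar (w k) + D2 d d)) + D xbar (t k *\<^sub>R w k) + t k *\<^sub>R D2 d d)
      \<longlonglongrightarrow> 0 *\<^sub>R 0 + D xbar 0 + 0 *\<^sub>R D2 d d"
    by (intro tendsto_intros t tw image_coord_expansion[OF t tw])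
  then show ?thesis
    by (simp add: blinfun.scaleR_right algebra_simps)
qed

lemma infdist_Ups_ray_le:
  assumes "t > 0" and "Ups xbar + t *\<^sub>R e \<in> S"
  shows "infdist (Ups (xbar + t *\<^sub>R d)) S \<le> t * (dist (D xbar d) e + t / 2 * norm (image_coord t 0))"
proof -
  have "Ups (xbar + t *\<^sub>R d) - (Ups xbar + t *\<^sub>R e) = t *\<^sub>R (D xbar d - e) + (t\<^sup>2 / 2) *\<^sub>R image_coord t 0"
    using Ups_so_curve[of t 0] \<open>t > 0\<close> by (simp add: algebra_simps)
  then have "dist (Ups (xbar + t *\<^sub>R d)) (Ups xbar + t *\<^sub>R e)
      = norm (t *\<^sub>R (D xbar d - e) + (t\<^sup>2 / 2) *\<^sub>R image_coord t 0)"
    by (simp add: dist_norm)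
  also have "\<dots> \<le> norm (t *\<^sub>R (D xbar d - e)) + norm ((t\<^sup>2 / 2) *\<^sub>R image_coord t 0)"
    by (rule norm_triangle_ineq)
  also have "\<dots> = t * (dist (D xbar d) e + t / 2 * norm (image_coord t 0))"
    using \<open>t > 0\<close> by (simp add: dist_norm power2_eq_square abs_mult abs_of_pos distrib_left)
  finally show ?thesis
    using infdist_le[OF assms(2), of "Ups (xbar + t *\<^sub>R d)"] by linarith
qed

lemma tangent_cone_preimage:
  assumes "D xbar d \<in> tangent_cone S (Ups xbar)"
  shows "d \<in> tangent_cone (Ups -` S) xbar"
proof -
  obtain t e where t: "\<forall>k. t k > 0" "t \<longlonglongrightarrow> 0" and e: "e \<longlonglongrightarrow> D xbar d"
    and inS: "\<forall>k. Ups xbar + t k *\<^sub>R e k \<in> S"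
    using assms unfolding tangent_cone_def by blast
  have t0: "(\<lambda>k. t k *\<^sub>R (0::'a)) \<longlonglongrightarrow> 0"
    by simp
  define bound where "bound k = \<kappa> * (dist (D xbar d) (e k) + t k / 2 * norm (image_coord (t k) 0))" for k
  have "eventually (\<lambda>k. norm (infdist (xbar + t k *\<^sub>R d) (Ups -` S) / t k) \<le> bound k) sequentially"
    using eventually_subregular_on_curve[OF t t0]
  proof (rule eventually_mono)
    fix k
    assume "infdist (so_curve xbar d (t k) 0) (Ups -` S) \<le> \<kappa> * infdist (Ups (so_curve xbar d (t k) 0)) S"
    then have "infdist (xbar + t k *\<^sub>R d) (Ups -` S) \<le> \<kappa> * infdist (Ups (xbar + t k *\<^sub>R d)) S"
      by simp
    also have "\<dots> \<le> t k * bound k"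
      using infdist_Ups_ray_le[of "t k" "e k"] t(1) inS pos(1) unfolding bound_def
      by (simp add: mult_left_mono mult.left_commute)
    finally show "norm (infdist (xbar + t k *\<^sub>R d) (Ups -` S) / t k) \<le> bound k"
      using t(1)[rule_format, of k] by (simp add: infdist_nonneg divide_le_eq mult.commute)
  qed
  moreover have "bound \<longlonglongrightarrow> \<kappa> * (dist (D xbar d) (D xbar d) + 0 / 2 * norm (D xbar 0 + D2 d d))"
    unfolding bound_def by (intro tendsto_intros e t image_coord_tendsto[OF t t0]) simp_all
  then have "bound \<longlonglongrightarrow> 0"
    by simp
  ultimately have "(\<lambda>k. infdist (xbar + t k *\<^sub>R d) (Ups -` S) / t k) \<longlonglongrightarrow> 0"
    by (rule Lim_null_comparison)
  then show ?thesis
    by (rule tangent_coneI_infdist[OF closed_preimage preimage_nonempty t])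
qed

lemma outer_so_tangent_preimage_near:
  assumes "u \<in> outer_so_tangent S (Ups xbar) (D xbar d)"
  shows "\<exists>v'\<in>outer_so_tangent (Ups -` S) xbar d. dist v v' \<le> \<kappa> * dist (D xbar v + D2 d d) u"
proof -
  obtain s where s: "\<forall>k. s k > 0" "s \<longlonglongrightarrow> 0"
    and lim: "(\<lambda>k. infdist (so_curve (Ups xbar) (D xbar d) (s k) u) S / (s k)\<^sup>2) \<longlonglongrightarrow> 0"
    using assms unfolding outer_so_tangent_def by blast
  have sv: "(\<lambda>k. s k *\<^sub>R v) \<longlonglongrightarrow> 0"
    using tendsto_scaleR[OF s(2) tendsto_const[of v]] by simp
  define f where "f k = 2 * \<kappa> * (infdist (so_curve (Ups xbar) (D xbar d) (s k) u) S / (s k)\<^sup>2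
      + dist (image_coord (s k) v) u / 2)" for k
  have "eventually (\<lambda>k. 2 * infdist (so_curve xbar d (s k) v) (Ups -` S) / (s k)\<^sup>2 \<le> f k) sequentially"
    using eventually_infdist_curve_le[OF s sv, of u] by (rule eventually_mono) (simp add: f_def)
  moreover have "f \<longlonglongrightarrow> 2 * \<kappa> * (0 + dist (D xbar v + D2 d d) u / 2)"
    unfolding f_def by (intro tendsto_intros lim image_coord_tendsto[OF s sv]) simp_all
  ultimately show ?thesis
    using outer_so_tangent_near[OF closed_preimage preimage_nonempty s] by simp
qed

lemma outer_so_regular_preimage:
  assumes regular: "outer_so_regular S (Ups xbar) (D xbar d)"
  shows "outer_so_regular (Ups -` S) xbar d"
  unfolding outer_so_regular_def
proof (intro conjI allI impI)
  show "d \<in> tangent_cone (Ups -` S) xbar"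
    using regular tangent_cone_preimage by (simp add: outer_so_regular_def)
  fix t w and \<epsilon> :: real
  assume t: "\<forall>k. t k > 0" "t \<longlonglongrightarrow> 0" and mem: "\<forall>k. so_curve xbar d (t k) (w k) \<in> Ups -` S"
    and tw: "(\<lambda>k. t k *\<^sub>R w k) \<longlonglongrightarrow> 0" and "\<epsilon> > 0"
  define z where "z k = image_coord (t k) (w k)" for k
  have z: "(\<lambda>k. z k - (D xbar (w k) + D2 d d)) \<longlonglongrightarrow> 0"
    unfolding z_def by (rule image_coord_expansion[OF t tw])
  have inS: "\<forall>k. so_curve (Ups xbar) (D xbar d) (t k) (z k) \<in> S"
    using mem t(1) by (simp add: z_def Ups_so_curve less_imp_neq[symmetric])
  have tz: "(\<lambda>k. t k *\<^sub>R z k) \<longlonglongrightarrow> 0"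
    unfolding z_def by (rule image_coord_scaled_tendsto_zero[OF t tw])
  define \<epsilon>' where "\<epsilon>' = \<epsilon> / (2 * \<kappa>)"
  have "\<epsilon>' > 0"
    using \<open>\<epsilon> > 0\<close> pos(1) by (simp add: \<epsilon>'_def)
  then have "eventually (\<lambda>k. \<exists>u\<in>outer_so_tangent S (Ups xbar) (D xbar d). dist (z k) u < \<epsilon>') sequentially"
    using regular t inS tz unfolding outer_so_regular_def by blast
  moreover have "eventually (\<lambda>k. dist (z k) (D xbar (w k) + D2 d d) < \<epsilon>') sequentially"
    using z \<open>\<epsilon>' > 0\<close> by (simp add: tendsto_iff dist_norm)
  ultimately show "eventually (\<lambda>k. \<exists>v\<in>outer_so_tangent (Ups -` S) xbar d. dist (w k) v < \<epsilon>) sequentially"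
  proof eventually_elim
    case (elim k)
    then obtain u where u: "u \<in> outer_so_tangent S (Ups xbar) (D xbar d)" and "dist (z k) u < \<epsilon>'"
      by blast
    obtain v where "v \<in> outer_so_tangent (Ups -` S) xbar d"
      and v: "dist (w k) v \<le> \<kappa> * dist (D xbar (w k) + D2 d d) u"
      using outer_so_tangent_preimage_near[OF u] by blast
    moreover have "dist (D xbar (w k) + D2 d d) u < 2 * \<epsilon>'"
      using dist_triangle[of "D xbar (w k) + D2 d d" u "z k"] elim \<open>dist (z k) u < \<epsilon>'\<close>
      by (simp add: dist_commute)
    then have "\<kappa> * dist (D xbar (w k) + D2 d d) u < \<epsilon>"
      using pos(1) by (simp add: \<epsilon>'_def field_simps)
    ultimately show ?case
      by force
  qed
qed

lemma image_outer_so_tangent: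
  assumes "w \<in> outer_so_tangent (Ups -` S) xbar d"
  shows "D xbar w + D2 d d \<in> outer_so_tangent S (Ups xbar) (D xbar d)"
proof -
  obtain s w' where s: "\<forall>k. s k > 0" "s \<longlonglongrightarrow> 0" and w': "w' \<longlonglongrightarrow> w"
    and mem: "\<forall>k. so_curve xbar d (s k) (w' k) \<in> Ups -` S"
    using outer_so_tangentE[OF closed_preimage preimage_nonempty assms] by metis
  have "(\<lambda>k. s k *\<^sub>R w' k) \<longlonglongrightarrow> 0"
    using tendsto_scaleR[OF s(2) w'] by simp
  then have "(\<lambda>k. image_coord (s k) (w' k)) \<longlonglongrightarrow> D xbar w + D2 d d"
    by (rule image_coord_tendsto[OF s _ w'])
  moreover have "\<forall>k. so_curve (Ups xbar) (D xbar d) (s k) (image_coord (s k) (w' k)) \<in> S"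
    using mem s(1) by (simp add: Ups_so_curve less_imp_neq[symmetric])
  ultimately show ?thesis
    by (rule outer_so_tangentI[OF s])
qed

lemma inner_so_tangent_preimageI:
  assumes "D xbar w + D2 d d \<in> inner_so_tangent S (Ups xbar) (D xbar d)"
  shows "w \<in> inner_so_tangent (Ups -` S) xbar d"
  unfolding inner_so_tangent_def mem_Collect_eq tendsto_at_iff_sequentially comp_def
proof (intro allI impI)
  define u where "u = D xbar w + D2 d d"
  fix \<tau> :: "nat \<Rightarrow> real"
  assume "\<forall>k. \<tau> k \<in> {0<..} - {0}" and "\<tau> \<longlonglongrightarrow> 0"
  then have \<tau>: "\<forall>k. \<tau> k > 0" "\<tau> \<longlonglongrightarrow> 0"
    by auto
  have \<tau>w: "(\<lambda>k. \<tau> k *\<^sub>R w) \<longlonglongrightarrow> 0"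
    using tendsto_scaleR[OF \<tau>(2) tendsto_const[of w]] by simp
  define f where "f k = \<kappa> * (infdist (so_curve (Ups xbar) (D xbar d) (\<tau> k) u) S / (\<tau> k)\<^sup>2
      + dist (image_coord (\<tau> k) w) u / 2)" for k
  have "(\<lambda>k. infdist (so_curve (Ups xbar) (D xbar d) (\<tau> k) u) S / (\<tau> k)\<^sup>2) \<longlonglongrightarrow> 0"
    using assms \<tau> unfolding inner_so_tangent_def u_def tendsto_at_iff_sequentially comp_def by auto
  then have "f \<longlonglongrightarrow> \<kappa> * (0 + dist u u / 2)"
    unfolding f_def u_def by (intro tendsto_intros image_coord_tendsto[OF \<tau> \<tau>w]) simp_all
  then have "f \<longlonglongrightarrow> 0"
    by simp
  have "eventually (\<lambda>k. norm (infdist (so_curve xbar d (\<tau> k) w) (Ups -` S) / (\<tau> k)\<^sup>2) \<le> f k) sequentially"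
    using eventually_infdist_curve_le[OF \<tau> \<tau>w, of u] by (rule eventually_mono) (simp add: f_def infdist_nonneg)
  then show "(\<lambda>k. infdist (so_curve xbar d (\<tau> k) w) (Ups -` S) / (\<tau> k)\<^sup>2) \<longlonglongrightarrow> 0"
    using \<open>f \<longlonglongrightarrow> 0\<close> by (rule Lim_null_comparison)
qed

lemma so_regular_preimage:
  assumes "so_regular S (Ups xbar) (D xbar d)"
  shows "so_regular (Ups -` S) xbar d"
proof -
  have "outer_so_tangent (Ups -` S) xbar d \<subseteq> inner_so_tangent (Ups -` S) xbar d"
    using assms image_outer_so_tangent inner_so_tangent_preimageI by (auto simp: so_regular_def)
  then show ?thesis
    using assms outer_so_regular_preimage inner_so_tangent_subset_outer
    unfolding so_regular_def by blast
qed

end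

theorem proposition2p1:
  fixes Ups :: "'a::euclidean_space \<Rightarrow> 'b::euclidean_space"
    and D :: "'a \<Rightarrow> ('a \<Rightarrow>\<^sub>L 'b)"
    and S :: "'b set" and xbar d :: 'a
  assumes "closed S"
    and "\<And>x. (Ups has_derivative blinfun_apply (D x)) (at x)"
    and "\<And>x. D differentiable (at x)"
    and "xbar \<in> Ups -` S"
    and "dir_metric_subregular Ups S xbar d"
    and "blinfun_apply (D xbar) d \<in> tangent_cone S (Ups xbar)"
  shows "(outer_so_regular S (Ups xbar) (blinfun_apply (D xbar) d)
            \<longrightarrow> outer_so_regular (Ups -` S) xbar d)
       \<and> (so_regular S (Ups xbar) (blinfun_apply (D xbar) d)
            \<longrightarrow> so_regular (Ups -` S) xbar d)"
proof -
  obtain D2 where "(D has_derivative D2) (at xbar)"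
    using assms(3) unfolding differentiable_def by blast
  moreover obtain \<kappa> \<rho> \<delta> where "\<kappa> > 0" "\<rho> > 0" "\<delta> > 0"
    and "\<forall>w\<in>dir_nbhd d \<rho> \<delta>. infdist (xbar + w) (Ups -` S) \<le> \<kappa> * infdist (Ups (xbar + w)) S"
    using assms(5) unfolding dir_metric_subregular_def by blast
  ultimately interpret subregular_constraint Ups D D2 S xbar d \<kappa> \<rho> \<delta>
    using assms(1,2,4) by unfold_locales auto
  \<comment> \<open>The tangent-cone hypothesis is part of outer second-order regularity of \<open>S\<close>.\<close>
  show ?thesis
    using outer_so_regular_preimage so_regular_preimage by blast
qed

end
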